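(* Let $n\ge 3$. The cardinality statistic $I\mapsto|I|$ is not homomesic under rowmotion on $\mathcal{IC}([n])$. More precisely, with $[i,j]=\{i,\dots,j\}$: the orbit $\{\emptyset,[n]\}$ has average cardinality $\frac n2$; for each $1\le k<\frac n2$, the orbit of $[1,k]$ (of size $n+2$) has average cardinality $\frac{2k(n-k)+n}{n+2}$; and, when $n$ is even, the orbit of $[1,\frac n2]$ (of size $\frac{n+2}{2}$) has average cardinality $\frac n2$.
   Context: $[n]$ denotes the chain poset $1<2<\cdots<n$. A subset $I\subseteq P$ of a finite poset is interval-closed if for all $x,y\in I$ and $z\in P$ with $x\le z\le y$ we have $z\in I$; $\mathcal{IC}(P)$ is the set of interval-closed subsets. For $x\in P$ the toggle $t_x$ sends $I$ to $I\triangle\{x\}$ if that is interval-closed and to $I$ otherwise. Rowmotion is $\mathrm{Row}=t_{x_1}\circ\cdots\circ t_{x_N}$, where $(x_1,\dots,x_N)$ is a linear extension of $P$ (toggling from the top down). A statistic is homomesic under rowmotion if its average over every rowmotion orbit is the same constant. *)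

theory Defs
  imports Complex_Main
begin

text \<open>The chain poset [n] is {1..n} with the usual order on nat.\<close>

definition interval_closed :: "nat \<Rightarrow> nat set \<Rightarrow> bool" where
  "interval_closed n I \<longleftrightarrow> I \<subseteq> {1..n} \<and>
     (\<forall>x\<in>I. \<forall>y\<in>I. \<forall>z\<in>{1..n}. x \<le> z \<and> z \<le> y \<longrightarrow> z \<in> I)"

definition IC :: "nat \<Rightarrow> nat set set" where
  "IC n = {I. interval_closed n I}"

definition toggle :: "nat \<Rightarrow> nat \<Rightarrow> nat set \<Rightarrow> nat set" where
  "toggle n x I = (let J = (I - {x}) \<union> ({x} - I) in if J \<in> IC n then J else I)"

text \<open>Rowmotion: Row = t_1 o t_2 o ... o t_n (toggle top-down: t_n applied first),
  for the (unique) linear extension (1,...,n) of the chain.\<close>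
definition row :: "nat \<Rightarrow> nat set \<Rightarrow> nat set" where
  "row n I = fold (toggle n) (rev [1..<n+1]) I"

definition row_orbit :: "nat \<Rightarrow> nat set \<Rightarrow> nat set set" where
  "row_orbit n I = {(row n ^^ k) I | k. True}"

definition orbit_avg :: "nat \<Rightarrow> (nat set \<Rightarrow> real) \<Rightarrow> nat set \<Rightarrow> real" where
  "orbit_avg n f I = (\<Sum>J\<in>row_orbit n I. f J) / real (card (row_orbit n I))"

definition homomesic :: "nat \<Rightarrow> (nat set \<Rightarrow> real) \<Rightarrow> bool" where
  "homomesic n f \<longleftrightarrow> (\<exists>c. \<forall>I\<in>IC n. orbit_avg n f I = c)"

end

theory Submission imports Defs begin

text \<open>Rowmotion acts on the intervals of the chain \<open>[n]\<close> in a very rigid way: \<open>[i,j]\<close> with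
  \<open>j < n\<close> is shifted to \<open>[i+1,j+1]\<close>, a final segment \<open>[i,n]\<close> goes to \<open>[1,i-1]\<close>, and \<open>\<emptyset>\<close> goes to \<open>[n]\<close>.
  Hence the orbit of \<open>[1,k]\<close> consists of the \<open>n-k+1\<close> translates of \<open>[1,k]\<close> followed by the
  \<open>k+1\<close> translates of \<open>[1,n-k]\<close>, giving the averages of the statement; comparing the
  averages over the orbits of \<open>\<emptyset>\<close> and \<open>[1,1]\<close> yields \<open>(n-2)\<^sup>2 = 0\<close>, so no homomesy.\<close>

lemma Icc_in_IC: "1 \<le> a \<Longrightarrow> b \<le> n \<Longrightarrow> {a..b} \<in> IC n"
  by (auto simp: IC_def interval_closed_def)

lemma empty_in_IC: "{} \<in> IC n"
  by (auto simp: IC_def interval_closed_def)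

lemma gap_not_in_IC:
  assumes "p \<in> J" "q \<in> J" "p \<le> z" "z \<le> q" "1 \<le> z" "z \<le> n" "z \<notin> J"
  shows "J \<notin> IC n"
  using assms atLeastAtMost_iff unfolding IC_def interval_closed_def by blast

lemma toggle_eqI: "(I - {x}) \<union> ({x} - I) = J \<Longrightarrow> J \<in> IC n \<Longrightarrow> toggle n x I = J"
  by (auto simp: toggle_def Let_def)

lemma toggle_eq_self: "(I - {x}) \<union> ({x} - I) \<notin> IC n \<Longrightarrow> toggle n x I = I"
  by (simp add: toggle_def Let_def)

lemma toggle_extend_top: "a \<le> b \<Longrightarrow> 1 \<le> a \<Longrightarrow> b < n \<Longrightarrow> toggle n (Suc b) {a..b} = {a..Suc b}"
  by (rule toggle_eqI[OF _ Icc_in_IC]) auto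

lemma toggle_extend_bottom: "x < b \<Longrightarrow> 1 \<le> x \<Longrightarrow> b \<le> n \<Longrightarrow> toggle n x {Suc x..b} = {x..b}"
  by (rule toggle_eqI[OF _ Icc_in_IC]) auto

lemma toggle_remove_bottom: "a < b \<Longrightarrow> 1 \<le> a \<Longrightarrow> b \<le> n \<Longrightarrow> toggle n a {a..b} = {Suc a..b}"
  by (rule toggle_eqI[OF _ Icc_in_IC]) auto

lemma toggle_remove_top: "a < b \<Longrightarrow> 1 \<le> a \<Longrightarrow> b \<le> n \<Longrightarrow> toggle n b {a..b} = {a..b - 1}"
  by (rule toggle_eqI[OF _ Icc_in_IC]) auto

lemma toggle_singleton: "toggle n a {a} = {}"
  by (rule toggle_eqI[OF _ empty_in_IC]) auto

lemma toggle_empty: "1 \<le> a \<Longrightarrow> a \<le> n \<Longrightarrow> toggle n a {} = {a}"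
  using toggle_eqI[OF _ Icc_in_IC, of "{}" a a a n] by simp

lemma toggle_far_above: "a \<le> b \<Longrightarrow> Suc (Suc b) \<le> x \<Longrightarrow> x \<le> n \<Longrightarrow> toggle n x {a..b} = {a..b}"
  by (rule toggle_eq_self, rule gap_not_in_IC[where p = a and q = x and z = "Suc b"]) auto

lemma toggle_far_below: "a \<le> b \<Longrightarrow> Suc x < a \<Longrightarrow> 1 \<le> x \<Longrightarrow> b \<le> n \<Longrightarrow> toggle n x {a..b} = {a..b}"
  by (rule toggle_eq_self, rule gap_not_in_IC[where p = x and q = b and z = "a - 1"]) auto

lemma toggle_interior: "a < x \<Longrightarrow> x < b \<Longrightarrow> b \<le> n \<Longrightarrow> toggle n x {a..b} = {a..b}"
  by (rule toggle_eq_self, rule gap_not_in_IC[where p = a and q = b and z = x]) auto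

definition row_from :: "nat \<Rightarrow> nat \<Rightarrow> nat set \<Rightarrow> nat set" where
  "row_from n a I = fold (toggle n) (rev [a..<n+1]) I"

lemma row_from_Suc_self: "row_from n (Suc n) I = I"
  by (simp add: row_from_def)

lemma row_from_step:
  assumes "a \<le> n"
  shows "row_from n a I = toggle n a (row_from n (Suc a) I)"
proof -
  have "[a..<n+1] = a # [Suc a..<n+1]"
    using assms by (simp add: upt_conv_Cons)
  then show ?thesis
    by (simp add: row_from_def)
qed

lemma row_eq_row_from: "row n I = row_from n 1 I"
  by (simp add: row_def row_from_def)

lemma row_from_empty: "a \<le> Suc n \<Longrightarrow> 1 \<le> a \<Longrightarrow> row_from n a {} = {a..n}"
proof (induction a rule: inc_induct)
  case base
  then show ?case by (simp add: row_from_Suc_self)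
next
  case (step a)
  then show ?case
    by (cases "a = n") (auto simp: row_from_step toggle_empty toggle_extend_bottom)
qed

lemma row_from_interval:
  assumes "1 \<le> i" "i \<le> j" "j < n"
  shows "a \<le> Suc n \<Longrightarrow> 1 \<le> a \<Longrightarrow> row_from n a {i..j} =
    (if Suc j < a then {i..j} else if i < a then {i..Suc j} else {Suc i..Suc j})"
proof (induction a rule: inc_induct)
  case base
  then show ?case using assms by (simp add: row_from_Suc_self)
next
  case (step a)
  consider "Suc j < a" | "a = Suc j" | "i < a" "a \<le> j" | "a = i" | "a < i"
    by linarith
  then show ?case
    by cases (use step assms in \<open>simp_all add: row_from_step toggle_far_above toggle_extend_top
      toggle_interior toggle_remove_bottom toggle_far_below\<close>)
qed

lemma row_from_final_segment:
  assumes "1 \<le> i" "i \<le> n"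
  shows "a \<le> Suc n \<Longrightarrow> 1 \<le> a \<Longrightarrow> row_from n a {i..n} = (if i < a then {i..a - 1} else {a..i - 1})"
proof (induction a rule: inc_induct)
  case base
  then show ?case using assms by (simp add: row_from_Suc_self)
next
  case (step a)
  consider "i < a" | "a = i" | "Suc a = i" | "Suc a < i"
    by linarith
  then show ?case
  proof cases
    case 1
    then show ?thesis using step assms toggle_remove_top[of i a n] by (simp add: row_from_step)
  next
    case 2
    then show ?thesis using step by (simp add: row_from_step toggle_singleton)
  next
    case 3
    then show ?thesis using step toggle_empty[of a n] by (auto simp: row_from_step)
  next
    case 4
    then show ?thesis
      using step assms toggle_extend_bottom[of a "i - 1" n] by (simp add: row_from_step)
  qed
qed

lemma row_empty: "1 \<le> n \<Longrightarrow> row n {} = {1..n}"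
  by (simp add: row_eq_row_from row_from_empty)

lemma row_interval: "1 \<le> i \<Longrightarrow> i \<le> j \<Longrightarrow> j < n \<Longrightarrow> row n {i..j} = {Suc i..Suc j}"
  by (simp add: row_eq_row_from row_from_interval)

lemma row_final_segment: "1 \<le> i \<Longrightarrow> i \<le> n \<Longrightarrow> row n {i..n} = {1..i - 1}"
  by (simp add: row_eq_row_from row_from_final_segment)

lemma funpow_row_interval:
  "1 \<le> i \<Longrightarrow> i \<le> j \<Longrightarrow> j + m \<le> n \<Longrightarrow> (row n ^^ m) {i..j} = {i + m..j + m}"
  by (induction m) (auto simp: row_interval)

lemma funpow_orbit_periodic:
  assumes "0 < p" "(f ^^ p) x = x"
  shows "{(f ^^ m) x | m. True} = (\<lambda>m. (f ^^ m) x) ` {..<p}"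
proof (intro equalityI subsetI)
  fix y assume "y \<in> {(f ^^ m) x | m. True}"
  then obtain m where "y = (f ^^ (m mod p)) x"
    using funpow_mod_eq[OF assms(2)] by auto
  then show "y \<in> (\<lambda>m. (f ^^ m) x) ` {..<p}"
    using assms(1) by auto
qed auto

lemma row_orbit_empty:
  assumes "1 \<le> n"
  shows "row_orbit n {} = {{}, {1..n}}"
proof -
  have "row n {} = {1..n}" "row n {1..n} = {}"
    using assms by (simp_all add: row_empty row_final_segment)
  then have "row_orbit n {} = (\<lambda>m. (row n ^^ m) {}) ` {..<2}"
    unfolding row_orbit_def by (intro funpow_orbit_periodic) (simp_all add: numeral_2_eq_2)
  also have "{..<2::nat} = {0, 1}"
    by auto
  finally show ?thesis
    using \<open>row n {} = {1..n}\<close> by simp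
qed

lemma funpow_row_initial_segment:
  assumes "1 \<le> k" "k < n" "m \<le> k"
  shows "(row n ^^ (n - k + 1 + m)) {1..k} = {1 + m..n - k + m}"
proof -
  have "(row n ^^ (n - k)) {1..k} = {n - k + 1..n}"
    using funpow_row_interval[of 1 k "n - k" n] assms by simp
  moreover have "row n {n - k + 1..n} = {1..n - k}"
    using row_final_segment[of "n - k + 1" n] assms by simp
  ultimately have "(row n ^^ (n - k + 1)) {1..k} = {1..n - k}"
    by simp
  moreover have "(row n ^^ (n - k + 1 + m)) {1..k} = (row n ^^ m) ((row n ^^ (n - k + 1)) {1..k})"
    by (simp only: add.commute[of "n - k + 1" m] funpow_add comp_apply)
  ultimately show ?thesis
    using funpow_row_interval[of 1 "n - k" m n] assms by simp
qed

lemma row_orbit_initial_segment: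
  assumes "1 \<le> k" "k < n"
  shows "row_orbit n {1..k} = (\<lambda>m. {1 + m..k + m}) ` {..n - k} \<union> (\<lambda>m. {1 + m..n - k + m}) ` {..k}"
proof -
  have "(row n ^^ (n + 2)) {1..k} = row n {1 + k..n}"
    using funpow_row_initial_segment[of k n k] assms by simp
  also have "\<dots> = {1..k}"
    using row_final_segment[of "1 + k" n] assms by simp
  finally have "(row n ^^ (n + 2)) {1..k} = {1..k}" .
  then have "row_orbit n {1..k} = (\<lambda>m. (row n ^^ m) {1..k}) ` {..<n + 2}"
    unfolding row_orbit_def by (intro funpow_orbit_periodic) simp_all
  also have "{..<n + 2} = {..n - k} \<union> (\<lambda>m. n - k + 1 + m) ` {..k}"
  proof (intro equalityI subsetI)
    fix m assume "m \<in> {..<n + 2}"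
    then show "m \<in> {..n - k} \<union> (\<lambda>m. n - k + 1 + m) ` {..k}"
      using assms by (cases "m \<le> n - k") (auto intro!: image_eqI[where x = "m - (n - k + 1)"])
  qed (use assms in auto)
  also have "(\<lambda>m. (row n ^^ m) {1..k}) ` \<dots> =
    (\<lambda>m. (row n ^^ m) {1..k}) ` {..n - k} \<union> (\<lambda>m. (row n ^^ (n - k + 1 + m)) {1..k}) ` {..k}"
    by (simp only: image_Un image_image)
  also have "\<dots> = (\<lambda>m. {1 + m..k + m}) ` {..n - k} \<union> (\<lambda>m. {1 + m..n - k + m}) ` {..k}"
  proof (intro arg_cong2[where f = "(\<union>)"] image_cong refl)
    fix m assume "m \<in> {..n - k}"
    then show "(row n ^^ m) {1..k} = {1 + m..k + m}"
      using assms by (simp add: funpow_row_interval)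
  next
    fix m assume "m \<in> {..k}"
    then show "(row n ^^ (n - k + 1 + m)) {1..k} = {1 + m..n - k + m}"
      using funpow_row_initial_segment[OF assms] by simp
  qed
  finally show ?thesis .
qed

lemma inj_on_shift_Icc: "inj_on (\<lambda>m::nat. {a + m..b + m}) A" if "a \<le> b"
  using that by (auto simp: inj_on_def Icc_eq_Icc)

lemma card_shifts_Icc: "a \<le> b \<Longrightarrow> card ((\<lambda>m::nat. {a + m..b + m}) ` {..c}) = c + 1"
  by (simp add: card_image inj_on_shift_Icc)

lemma sum_card_shifts_Icc:
  "a \<le> b \<Longrightarrow> (\<Sum>J\<in>(\<lambda>m::nat. {a + m..b + m}) ` {..c}. real (card J)) = real (c + 1) * real (Suc b - a)"
  by (simp add: sum.reindex inj_on_shift_Icc)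

lemma orbit_avg_card_empty: "1 \<le> n \<Longrightarrow> orbit_avg n (\<lambda>I. real (card I)) {} = real n / 2"
  by (auto simp: orbit_avg_def row_orbit_empty)

lemma orbit_initial_segment_small:
  assumes "1 \<le> k" "2 * k < n"
  shows "card (row_orbit n {1..k}) = n + 2
    \<and> orbit_avg n (\<lambda>I. real (card I)) {1..k} = (2 * real k * (real n - real k) + real n) / (real n + 2)"
proof -
  let ?A = "(\<lambda>m. {1 + m..k + m}) ` {..n - k}" and ?B = "(\<lambda>m. {1 + m..n - k + m}) ` {..k}"
  have orbit: "row_orbit n {1..k} = ?A \<union> ?B"
    using row_orbit_initial_segment assms by simp
  have disjoint: "?A \<inter> ?B = {}"
    using assms by auto
  have "card ?A = n - k + 1" "card ?B = k + 1"
    using assms by (simp_all only: card_shifts_Icc)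
  then have card: "card (row_orbit n {1..k}) = n + 2"
    unfolding orbit using card_Un_disjoint[OF _ _ disjoint] assms by simp
  have "(\<Sum>J\<in>row_orbit n {1..k}. real (card J)) = (\<Sum>J\<in>?A. real (card J)) + (\<Sum>J\<in>?B. real (card J))"
    unfolding orbit by (rule sum.union_disjoint[OF _ _ disjoint]) auto
  also have "\<dots> = real (n - k + 1) * real k + real (k + 1) * real (n - k)"
    using assms by (simp only: sum_card_shifts_Icc) simp
  finally have "(\<Sum>J\<in>row_orbit n {1..k}. real (card J)) = real (n - k + 1) * real k + real (k + 1) * real (n - k)" .
  then show ?thesis
    using card assms by (simp add: orbit_avg_def of_nat_diff algebra_simps)
qed

lemma orbit_initial_segment_half:
  assumes "even n" "2 \<le> n"
  shows "card (row_orbit n {1..n div 2}) = (n + 2) div 2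
    \<and> orbit_avg n (\<lambda>I. real (card I)) {1..n div 2} = real n / 2"
proof -
  obtain k where n: "n = 2 * k" and "1 \<le> k"
    using assms by (auto elim: evenE)
  then have "row_orbit n {1..k} = (\<lambda>m. {1 + m..k + m}) ` {..k}"
    using row_orbit_initial_segment[of k n] by simp
  moreover have "card ((\<lambda>m. {1 + m..k + m}) ` {..k}) = k + 1"
    using \<open>1 \<le> k\<close> by (rule card_shifts_Icc)
  moreover have "(\<Sum>J\<in>(\<lambda>m. {1 + m..k + m}) ` {..k}. real (card J)) = real (k + 1) * real k"
    using sum_card_shifts_Icc[OF \<open>1 \<le> k\<close>] by simp
  ultimately show ?thesis
    by (simp add: n orbit_avg_def)
qed

lemma card_not_homomesic:
  assumes "3 \<le> n"
  shows "\<not> homomesic n (\<lambda>I. real (card I))"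
proof
  assume "homomesic n (\<lambda>I. real (card I))"
  then obtain c where c: "\<And>I. I \<in> IC n \<Longrightarrow> orbit_avg n (\<lambda>I. real (card I)) I = c"
    unfolding homomesic_def by blast
  have "real n / 2 = c"
    using c[OF empty_in_IC] orbit_avg_card_empty assms by simp
  moreover have "(2 * (real n - 1) + real n) / (real n + 2) = c"
    using c[OF Icc_in_IC[of 1 1]] orbit_initial_segment_small[of 1 n] assms by simp
  ultimately have "(2 * (real n - 1) + real n) * 2 = real n * (real n + 2)"
    by (simp add: field_simps)
  then have "(real n - 2) ^ 2 = 0"
    by (simp add: algebra_simps power2_eq_square)
  then show False
    using assms by simp
qed

theorem proposition3p14:
  fixes n :: nat
  assumes "n \<ge> 3"
  shows "\<not> homomesic n (\<lambda>I. real (card I))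
    \<and> row_orbit n {} = {{}, {1..n}}
    \<and> orbit_avg n (\<lambda>I. real (card I)) {} = real n / 2
    \<and> (\<forall>k::nat. 1 \<le> k \<and> 2 * k < n \<longrightarrow>
          card (row_orbit n {1..k}) = n + 2
        \<and> orbit_avg n (\<lambda>I. real (card I)) {1..k}
            = (2 * real k * (real n - real k) + real n) / (real n + 2))
    \<and> (even n \<longrightarrow>
          card (row_orbit n {1..n div 2}) = (n + 2) div 2
        \<and> orbit_avg n (\<lambda>I. real (card I)) {1..n div 2} = real n / 2)"
  using assms card_not_homomesic row_orbit_empty orbit_avg_card_empty
    orbit_initial_segment_small orbit_initial_segment_half by simp

end
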